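(* Let $R$ be a commutative ring with $1_R$ which is torsion free (an integral domain), let $M$ be a torsion free $R$-module, and let $\mathbf f$ be an endomorphism of $M$. Suppose: (b) $\mathbf f$ maps $\varphi_0(M)$ onto $\varphi_0(M)$; (d) $\varphi_\varepsilon(x)$, for $\varepsilon\le\varepsilon_*$, are formulas of $\mathscr{L}_{\infty,\aleph_0}(\tau_R)$ generated from atomic formulas by $\exists$ and $\wedge$ (existential positive); (e) $\langle\varphi_\varepsilon(M):\varepsilon\le\varepsilon_*\rangle$ is a $\subseteq$-decreasing continuous sequence of submodules of $M$; (f) $\varphi_{\varepsilon_*}(M)=\{0_M\}$; (g) for each $\varepsilon<\varepsilon_*$, $\varphi_\varepsilon(M)/\varphi_{\varepsilon+1}(M)$ is torsion free of rank $1$, hence isomorphic to a sub-$R$-module of $\mathbb Q_R$; (h) $x_\varepsilon\in\varphi_\varepsilon(M)\setminus\varphi_{\varepsilon+1}(M)$ for $\varepsilon<\varepsilon_*$; (i) $\varphi_0(M)=\mathrm{PC}_M(\{x_\varepsilon:\varepsilon<\varepsilon_*\})$. Then $\mathbf f\restriction\varphi_0(M)$ is one-to-one.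
   Context: $\tau_R$ is the vocabulary of $R$-modules ($+,-,0$ and unary multiplication by each $r\in R$). $\mathbb Q_R$ is the field of fractions of $R$. A decreasing sequence indexed by $\varepsilon\le\varepsilon_*$ is continuous if at each limit $\delta$ the $\delta$-th term is the intersection of the earlier terms. A submodule $N\subseteq M$ is pure if $rN=rM\cap N$ for all $r\in R$; $\mathrm{PC}_M(Y)$ denotes the minimal pure submodule of $M$ containing $Y$. $\varphi(M)=\{a\in M:M\models\varphi[a]\}$. *)

theory Defs
  imports Complex_Main
begin

datatype 'r trm =
    Var nat
  | Zero
  | Plus "'r trm" "'r trm"
  | Minus "'r trm" "'r trm"
  | Neg "'r trm"
  | Smul 'r "'r trm"

text \<open>A conjunction is indexed by the (arbitrary)
  type 'i; smaller conjunctions are obtained by repetition.\<close>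
datatype ('r, 'i) epform =
    Eq "'r trm" "'r trm"
  | Ex nat "('r, 'i) epform"
  | Conj "'i \<Rightarrow> ('r, 'i) epform"

primrec tfv :: "'r trm \<Rightarrow> nat set" where
  "tfv (Var n) = {n}"
| "tfv Zero = {}"
| "tfv (Plus s t) = tfv s \<union> tfv t"
| "tfv (Minus s t) = tfv s \<union> tfv t"
| "tfv (Neg t) = tfv t"
| "tfv (Smul r t) = tfv t"

primrec ffv :: "('r, 'i) epform \<Rightarrow> nat set" where
  "ffv (Eq s t) = tfv s \<union> tfv t"
| "ffv (Ex n \<phi>) = ffv \<phi> - {n}"
| "ffv (Conj g) = (\<Union>i. ffv (g i))"

primrec teval :: "('r \<Rightarrow> 'm::ab_group_add \<Rightarrow> 'm) \<Rightarrow> (nat \<Rightarrow> 'm) \<Rightarrow> 'r trm \<Rightarrow> 'm" where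
  "teval sc v (Var n) = v n"
| "teval sc v Zero = 0"
| "teval sc v (Plus s t) = teval sc v s + teval sc v t"
| "teval sc v (Minus s t) = teval sc v s - teval sc v t"
| "teval sc v (Neg t) = - teval sc v t"
| "teval sc v (Smul r t) = sc r (teval sc v t)"

primrec sat :: "('r \<Rightarrow> 'm::ab_group_add \<Rightarrow> 'm) \<Rightarrow> ('r, 'i) epform \<Rightarrow> (nat \<Rightarrow> 'm) \<Rightarrow> bool" where
  "sat sc (Eq s t) = (\<lambda>v. teval sc v s = teval sc v t)"
| "sat sc (Ex n \<phi>) = (\<lambda>v. \<exists>a. sat sc \<phi> (v(n := a)))"
| "sat sc (Conj g) = (\<lambda>v. \<forall>i. sat sc (g i) v)"

text \<open>A formula phi(x) in the single free variable x = Var 0; phi(M) is the set it defines.\<close>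
definition defset :: "('r \<Rightarrow> 'm::ab_group_add \<Rightarrow> 'm) \<Rightarrow> ('r, 'i) epform \<Rightarrow> 'm set" where
  "defset sc \<phi> = {a. sat sc \<phi> ((\<lambda>_. 0)(0 := a))}"

definition torsion_free_module :: "('r::idom \<Rightarrow> 'm::ab_group_add \<Rightarrow> 'm) \<Rightarrow> bool" where
  "torsion_free_module sc \<longleftrightarrow> (\<forall>r a. r \<noteq> 0 \<longrightarrow> sc r a = 0 \<longrightarrow> a = 0)"

definition pure_submodule :: "('r::comm_ring_1 \<Rightarrow> 'm::ab_group_add \<Rightarrow> 'm) \<Rightarrow> 'm set \<Rightarrow> bool" where
  "pure_submodule sc N \<longleftrightarrow> module.subspace sc N \<and>
     (\<forall>r. sc r ` N = sc r ` UNIV \<inter> N)"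

definition PC :: "('r::comm_ring_1 \<Rightarrow> 'm::ab_group_add \<Rightarrow> 'm) \<Rightarrow> 'm set \<Rightarrow> 'm set" where
  "PC sc Y = \<Inter>{N. pure_submodule sc N \<and> Y \<subseteq> N}"

text \<open>The quotient A/B (B a submodule of A) is torsion free of rank 1:
  torsion free, nonzero, and any two elements are linearly dependent.\<close>
definition quot_tf_rank1 :: "('r::idom \<Rightarrow> 'm::ab_group_add \<Rightarrow> 'm) \<Rightarrow> 'm set \<Rightarrow> 'm set \<Rightarrow> bool" where
  "quot_tf_rank1 sc A B \<longleftrightarrow>
     (\<forall>r a. r \<noteq> 0 \<longrightarrow> a \<in> A \<longrightarrow> sc r a \<in> B \<longrightarrow> a \<in> B) \<and>
     (\<exists>a\<in>A. a \<notin> B) \<and>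
     (\<forall>a\<in>A. \<forall>b\<in>A. \<exists>r s. (r \<noteq> 0 \<or> s \<noteq> 0) \<and> sc r a - sc s b \<in> B)"

definition osucc :: "'o::wellorder \<Rightarrow> 'o" where
  "osucc e = (LEAST e'. e < e')"

definition is_limit :: "'o::wellorder \<Rightarrow> bool" where
  "is_limit d \<longleftrightarrow> (\<exists>e. e < d) \<and> (\<forall>e<d. \<exists>e'. e < e' \<and> e' < d)"

end

(* Since the formulas are existential positive, f maps every phi_e(M) into itself and so
   induces an endomorphism of each rank-1 factor phi_e(M)/phi_(e+1)(M); such a map kills
   either nothing or everything.  Call a level degenerate if it kills everything.  By
   continuity every nonzero element of phi_0(M) has an exact level, and a nonzero kernel
   element would make its exact level degenerate.  But a degenerate level e has a
   degenerate predecessor: pick x in phi_e(M) - phi_(e+1)(M) and, by surjectivity, y with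
   f y = x; the exact level of y is below e and degenerate too.  By well-foundedness no
   level is degenerate, so f is injective. *)

theory Submission
  imports Defs
begin

lemma teval_module_hom:
  assumes "module_hom s1 s2 f"
  shows "teval s2 (f \<circ> v) t = f (teval s1 v t)"
proof -
  interpret module_hom s1 s2 f by fact
  show ?thesis by (induction t) (simp_all add: add diff neg scale)
qed

lemma sat_module_hom:
  assumes "module_hom s1 s2 f" and "sat s1 \<phi> v"
  shows "sat s2 \<phi> (f \<circ> v)"
  using assms(2)
proof (induction \<phi> arbitrary: v)
  case (Eq s t)
  then show ?case by (simp add: teval_module_hom[OF assms(1), unfolded comp_def])
next
  case (Ex n \<phi>)
  then obtain a where "sat s1 \<phi> (v(n := a))" by auto
  from Ex.IH[OF this] have "sat s2 \<phi> ((f \<circ> v)(n := f a))"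
    by (simp only: fun_upd_comp)
  then show ?case unfolding sat.simps by (rule exI)
next
  case (Conj g)
  then show ?case by auto
qed

lemma defset_module_hom:
  assumes "module_hom s1 s2 f"
  shows "f ` defset s1 \<phi> \<subseteq> defset s2 \<phi>"
proof
  fix b assume "b \<in> f ` defset s1 \<phi>"
  then obtain a where a: "sat s1 \<phi> ((\<lambda>_. 0)(0 := a))" and b: "b = f a"
    by (auto simp: defset_def)
  have "f \<circ> (\<lambda>_. 0)(0 := a) = (\<lambda>_. 0)(0 := f a)"
    using module_hom.zero[OF assms] by (auto simp: fun_eq_iff)
  with sat_module_hom[OF assms a] have "sat s2 \<phi> ((\<lambda>_. 0)(0 := f a))"
    by metis
  with b show "b \<in> defset s2 \<phi>"
    by (simp add: defset_def)
qed

lemma osucc_greater: "e < e' \<Longrightarrow> e < osucc e"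
  unfolding osucc_def by (rule LeastI)

lemma osucc_least: "e < e' \<Longrightarrow> osucc e \<le> e'"
  unfolding osucc_def by (rule Least_le)

lemma not_limit_obtains_osucc:
  assumes "e < m" and "\<not> is_limit m"
  obtains d where "d < m" and "osucc d = m"
proof -
  from assms obtain d where d: "d < m" and no_between: "\<And>d'. d < d' \<Longrightarrow> \<not> d' < m"
    unfolding is_limit_def by blast
  have "osucc d = m"
    using osucc_least[OF d] no_between[OF osucc_greater[OF d]] by simp
  with d that show ?thesis by blast
qed

text \<open>The least index whose set misses y is neither bot nor, by continuity, a limit.\<close>

lemma exists_exact_level:
  fixes D :: "'o::{wellorder,order_bot} \<Rightarrow> 'a set"
  assumes continuous: "\<And>d. d \<le> l \<Longrightarrow> is_limit d \<Longrightarrow> D d = (\<Inter>e\<in>{e. e < d}. D e)"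
    and "y \<in> D bot" and "y \<notin> D l"
  obtains d where "d < l" and "y \<in> D d" and "y \<notin> D (osucc d)"
proof -
  let ?S = "{e. e \<le> l \<and> y \<notin> D e}"
  define m where "m = (LEAST e. e \<in> ?S)"
  have "m \<in> ?S"
    unfolding m_def by (rule LeastI[of _ l]) (simp add: assms(3))
  then have m: "m \<le> l" "y \<notin> D m" by simp_all
  have below: "y \<in> D e" if "e < m" for e
  proof (rule ccontr)
    assume "y \<notin> D e"
    with that m(1) have "e \<in> ?S" by simp
    then have "m \<le> e" unfolding m_def by (rule Least_le)
    with that show False by simp
  qed
  have "m \<noteq> bot"
    using m(2) assms(2) by blast
  then have "bot < m"
    by (simp add: bot_less)
  moreover have "\<not> is_limit m"
  proof
    assume "is_limit m"
    moreover have "y \<in> (\<Inter>e\<in>{e. e < m}. D e)"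
      using below by blast
    ultimately show False
      using continuous[OF m(1)] m(2) by blast
  qed
  ultimately obtain d where d: "d < m" and "osucc d = m"
    by (rule not_limit_obtains_osucc)
  moreover have "d < l"
    using d m(1) by (rule less_le_trans)
  ultimately show ?thesis
    using that below m(2) by blast
qed

text \<open>Any b in A satisfies r b - s a in B with r nonzero, since B is pure in A; apply f
  and use purity again.\<close>

lemma quot_tf_rank1_hom_vanishes:
  assumes hom: "module_hom sc sc f"
    and rank1: "quot_tf_rank1 sc A B" and B: "module.subspace sc B"
    and A_stable: "f ` A \<subseteq> A" and B_stable: "f ` B \<subseteq> B"
    and a: "a \<in> A" "a \<notin> B" "f a \<in> B"
  shows "f ` A \<subseteq> B"
proof
  interpret module_hom sc sc f by fact
  have pure: "c \<in> B" if "r \<noteq> 0" "c \<in> A" "sc r c \<in> B" for r c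
    using rank1 that unfolding quot_tf_rank1_def by blast
  fix fb assume "fb \<in> f ` A"
  then obtain b where b: "b \<in> A" and fb: "fb = f b" by blast
  from rank1 b a(1) obtain r s where rs: "r \<noteq> 0 \<or> s \<noteq> 0" "sc r b - sc s a \<in> B"
    unfolding quot_tf_rank1_def by blast
  have "r \<noteq> 0"
  proof
    assume "r = 0"
    with rs have "s \<noteq> 0" and "sc s a \<in> B"
      using m1.subspace_neg[OF B] by fastforce+
    with pure a show False by blast
  qed
  have "sc r (f b) - sc s (f a) \<in> B"
    using B_stable rs(2) by (auto simp: diff scale)
  moreover have "sc s (f a) \<in> B"
    using m1.subspace_scale[OF B a(3)] .
  ultimately have "sc r (f b) \<in> B"
    using m1.subspace_add[OF B] by fastforce
  with pure[OF \<open>r \<noteq> 0\<close>] A_stable b fb show "fb \<in> B" by blast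
qed

locale rank1_filtration =
  fixes sc :: "'r::idom \<Rightarrow> 'm::ab_group_add \<Rightarrow> 'm"
    and D :: "'o::{wellorder,order_bot} \<Rightarrow> 'm set"
    and estar :: 'o
  assumes module: "module sc"
    and subspace: "\<And>e. e \<le> estar \<Longrightarrow> module.subspace sc (D e)"
    and decreasing: "\<And>e e'. e \<le> e' \<Longrightarrow> e' \<le> estar \<Longrightarrow> D e' \<subseteq> D e"
    and continuous: "\<And>d. d \<le> estar \<Longrightarrow> is_limit d \<Longrightarrow> D d = (\<Inter>e\<in>{e. e < d}. D e)"
    and D_estar: "D estar = {0}"
    and rank1: "\<And>e. e < estar \<Longrightarrow> quot_tf_rank1 sc (D e) (D (osucc e))"

locale rank1_filtration_endo = rank1_filtration +
  fixes f :: "'m::ab_group_add \<Rightarrow> 'm"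
  assumes hom: "module_hom sc sc f"
    and stable: "\<And>e. e \<le> estar \<Longrightarrow> f ` D e \<subseteq> D e"
begin

lemma exact_level:
  assumes "y \<in> D bot" and "y \<noteq> 0"
  obtains d where "d < estar" and "y \<in> D d" and "y \<notin> D (osucc d)"
proof -
  have "y \<notin> D estar"
    using assms(2) D_estar by simp
  with exists_exact_level[OF continuous assms(1)] that show thesis
    by blast
qed

lemma factor_vanishes_if_drops:
  assumes "e < estar" and "a \<in> D e" "a \<notin> D (osucc e)" "f a \<in> D (osucc e)"
  shows "f ` D e \<subseteq> D (osucc e)"
proof -
  have succ: "osucc e \<le> estar"
    using osucc_least[OF assms(1)] .
  show ?thesis
    using quot_tf_rank1_hom_vanishes[OF hom rank1[OF assms(1)] subspace[OF succ]
        stable[OF less_imp_le[OF assms(1)]] stable[OF succ] assms(2-4)] .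
qed

text \<open>Infinite descent: a preimage of an element of exact level e has a strictly
  smaller exact level, at which the induced map vanishes as well.\<close>

lemma factor_not_vanishes:
  assumes surjective: "f ` D bot = D bot" and "e < estar"
  shows "\<not> f ` D e \<subseteq> D (osucc e)"
  using assms(2)
proof (induction e rule: less_induct)
  case (less e)
  show ?case
  proof
    assume vanishes: "f ` D e \<subseteq> D (osucc e)"
    obtain a where a: "a \<in> D e" "a \<notin> D (osucc e)"
      using rank1[OF less.prems] unfolding quot_tf_rank1_def by blast
    have "a \<in> D bot"
      using decreasing[OF bot_least less_imp_le[OF less.prems]] a(1) by blast
    then have "a \<in> f ` D bot"
      using surjective by simp
    then obtain y where y: "y \<in> D bot" "f y = a"
      by auto
    have "0 \<in> D (osucc e)"
      using module.subspace_0[OF module subspace[OF osucc_least[OF less.prems]]] .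
    with a(2) y(2) have "y \<noteq> 0"
      using module_hom.zero[OF hom] by auto
    with y(1) obtain d where d: "d < estar" "y \<in> D d" "y \<notin> D (osucc d)"
      by (rule exact_level)
    show False
    proof (cases "e \<le> d")
      case True
      then have "y \<in> D e"
        using decreasing[OF True less_imp_le[OF d(1)]] d(2) by blast
      with vanishes y(2) a(2) show False by blast
    next
      case False
      then have "d < e" by simp
      have "D e \<subseteq> D (osucc d)"
        using decreasing[OF osucc_least[OF \<open>d < e\<close>] less_imp_le[OF less.prems]] .
      with a(1) y(2) have "f y \<in> D (osucc d)" by blast
      with less.IH[OF \<open>d < e\<close> d(1)] factor_vanishes_if_drops[OF d] show False by blast
    qed
  qed
qed

lemma inj_on_bot:
  assumes surjective: "f ` D bot = D bot"
  shows "inj_on f (D bot)"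
proof -
  interpret module_hom sc sc f by (fact hom)
  have "u = 0" if u: "u \<in> D bot" "f u = 0" for u
  proof (rule ccontr)
    assume "u \<noteq> 0"
    with u(1) obtain d where d: "d < estar" "u \<in> D d" "u \<notin> D (osucc d)"
      by (rule exact_level)
    have "f u \<in> D (osucc d)"
      using u(2) m1.subspace_0[OF subspace[OF osucc_least[OF d(1)]]] by simp
    with factor_not_vanishes[OF surjective d(1)] factor_vanishes_if_drops[OF d]
    show False by blast
  qed
  then show ?thesis
    using inj_on_iff_eq_0[OF subspace[OF bot_least]] by blast
qed

end

theorem lemma6p3:
  fixes sc :: "'r::idom \<Rightarrow> 'm::ab_group_add \<Rightarrow> 'm"
    and f :: "'m \<Rightarrow> 'm"
    and \<phi> :: "'o::{wellorder,order_bot} \<Rightarrow> ('r, 'i) epform"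
    and estar :: "'o"
    and x :: "'o \<Rightarrow> 'm"
  assumes M: "module sc"
    and tf: "torsion_free_module sc"
    and endo: "module_hom sc sc f"
    and b: "f ` defset sc (\<phi> bot) = defset sc (\<phi> bot)"
    and d: "\<And>e. e \<le> estar \<Longrightarrow> ffv (\<phi> e) \<subseteq> {0}"
    and e_sub: "\<And>e. e \<le> estar \<Longrightarrow> module.subspace sc (defset sc (\<phi> e))"
    and e_dec: "\<And>e e'. e \<le> e' \<Longrightarrow> e' \<le> estar \<Longrightarrow> defset sc (\<phi> e') \<subseteq> defset sc (\<phi> e)"
    and e_cont: "\<And>d. d \<le> estar \<Longrightarrow> is_limit d \<Longrightarrow>
                   defset sc (\<phi> d) = (\<Inter>e\<in>{e. e < d}. defset sc (\<phi> e))"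
    and f_zero: "defset sc (\<phi> estar) = {0}"
    and g: "\<And>e. e < estar \<Longrightarrow> quot_tf_rank1 sc (defset sc (\<phi> e)) (defset sc (\<phi> (osucc e)))"
    and h: "\<And>e. e < estar \<Longrightarrow> x e \<in> defset sc (\<phi> e) - defset sc (\<phi> (osucc e))"
    and i: "defset sc (\<phi> bot) = PC sc (x ` {e. e < estar})"
  shows "inj_on f (defset sc (\<phi> bot))"
proof -
  interpret rank1_filtration_endo sc "\<lambda>e. defset sc (\<phi> e)" estar f
    using rank1_filtration.intro[OF M e_sub e_dec e_cont f_zero g]
      rank1_filtration_endo_axioms.intro[OF endo defset_module_hom[OF endo]]
    by (rule rank1_filtration_endo.intro)
  show ?thesis using inj_on_bot[OF b] .
qed

end
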